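(* Let $n\ge2$ and $0\le r_l\le r_u<1$. For all $x,y\in\mathbb{B}^n$ with $r_l\le|x|\le|y|\le r_u$, $$\sqrt{\frac{1+r_l^2}{2}}\,\mathrm{th}\frac{\rho_{\mathbb{B}^n}(x,y)}{2}\le b_{\mathbb{B}^n,2}(x,y)\le\frac{1+r_u}{\sqrt2}\,\mathrm{th}\frac{\rho_{\mathbb{B}^n}(x,y)}{2},$$ and these are the best possible constants depending only on $r_l$ and $r_u$.
   Context: $\mathbb{B}^n$ is the unit ball of $\mathbb{R}^n$. The hyperbolic metric of the unit ball satisfies $\mathrm{th}\frac{\rho_{\mathbb{B}^n}(x,y)}{2}=\frac{|x-y|}{\sqrt{|x-y|^2+(1-|x|^2)(1-|y|^2)}}$. For a domain $G\subsetneq\mathbb{R}^n$ and $p\ge1$, the Barrlund metric is $b_{G,p}(x,y)=\sup_{z\in\partial G}\frac{|x-y|}{(|x-z|^p+|z-y|^p)^{1/p}}$. (For the unit ball, $b_{\mathbb{B}^n,2}(x,y)=\frac{|x-y|}{\sqrt{2+|x|^2+|y|^2-2|x+y|}}$.) *)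

theory Defs
  imports "HOL-Analysis.Analysis"
begin

text \<open>Hyperbolic metric of the unit ball, via th(rho/2) = |x-y| / sqrt(|x-y|^2 + (1-|x|^2)(1-|y|^2)).\<close>
definition rho_ball :: "'a::euclidean_space \<Rightarrow> 'a \<Rightarrow> real" where
  "rho_ball x y = 2 * artanh (norm (x - y) /
      sqrt ((norm (x - y))^2 + (1 - (norm x)^2) * (1 - (norm y)^2)))"

definition barrlund :: "'a::euclidean_space set \<Rightarrow> real \<Rightarrow> 'a \<Rightarrow> 'a \<Rightarrow> real" where
  "barrlund G p x y = (SUP z\<in>frontier G.
      norm (x - y) / ((norm (x - z)) powr p + (norm (z - y)) powr p) powr (1 / p))"

end

theory Submission
  imports Defs
begin

(*
  Both quantities depend only on |x|, |y| and |x + y|: with the closed forms of th(rho/2) and of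
  b = b_{B^n,2} and the parallelogram law,
    (b / th(rho/2))^2 = ((1 + |x|^2)(1 + |y|^2) - |x + y|^2) / (2 + |x|^2 + |y|^2 - 2 |x + y|).
  For fixed |x| <= |y| < 1 this lies between (1 + |x|^2)/2 and (1 + |y|)^2/2 whenever
  0 <= |x + y| <= |x| + |y|, which gives the two inequalities. For |x| = |y| = r it equals
  (1 + r^2 + |x + y|)/2, so antipodal points of radius close to r_l, and distinct points of
  radius r_u with |x + y| close to 2 r_u, show that neither constant can be improved.
*)

lemma tanh_artanh_real:
  fixes t :: real
  assumes "-1 < t" "t < 1"
  shows "tanh (artanh t) = t"
proof -
  define q where "q = (1 + t) / (1 - t)"
  have q: "q > 0" using assms by (simp add: q_def)
  have "artanh t = ln (sqrt q)" using q by (simp add: artanh_def q_def ln_sqrt)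
  hence "tanh (artanh t) = (q - 1) / (q + 1)" using q by (simp add: tanh_ln_real)
  also have "\<dots> = t" using assms by (simp add: q_def field_simps)
  finally show ?thesis .
qed

lemma tanh_half_rho_ball:
  fixes x y :: "'a::euclidean_space"
  assumes "norm x < 1" "norm y < 1"
  shows "tanh (rho_ball x y / 2) =
    norm (x - y) / sqrt ((norm (x - y))^2 + (1 - (norm x)^2) * (1 - (norm y)^2))"
proof -
  define d where "d = norm (x - y)"
  define P where "P = (1 - (norm x)^2) * (1 - (norm y)^2)"
  have "P > 0" using assms by (simp add: P_def abs_square_less_1)
  hence lt: "d < sqrt (d^2 + P)" by (simp add: real_less_rsqrt)
  have d: "0 \<le> d" by (simp add: d_def)
  hence "0 < sqrt (d^2 + P)" using lt by linarith
  hence "0 \<le> d / sqrt (d^2 + P)" "d / sqrt (d^2 + P) < 1"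
    using d lt by (simp_all add: divide_less_eq_1_pos)
  hence "tanh (artanh (d / sqrt (d^2 + P))) = d / sqrt (d^2 + P)"
    by (intro tanh_artanh_real) auto
  thus ?thesis by (simp add: rho_ball_def d_def P_def)
qed

lemma tanh_half_rho_ball_pos:
  fixes x y :: "'a::euclidean_space"
  assumes "norm x < 1" "norm y < 1" "x \<noteq> y"
  shows "0 < tanh (rho_ball x y / 2)"
proof -
  have "0 < (1 - (norm x)^2) * (1 - (norm y)^2)" using assms by (simp add: abs_square_less_1)
  thus ?thesis using assms by (simp add: tanh_half_rho_ball add_nonneg_pos)
qed

lemma tanh_half_rho_ball_nonneg:
  fixes x y :: "'a::euclidean_space"
  assumes "norm x < 1" "norm y < 1"
  shows "0 \<le> tanh (rho_ball x y / 2)"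
  using tanh_half_rho_ball_pos[OF assms] by (cases "x = y") (auto simp: rho_ball_def)

lemma barrlund_denominator_pos:
  fixes a b s :: real
  assumes "a < 1" "s \<le> a + b"
  shows "0 < 2 + a^2 + b^2 - 2 * s"
proof -
  have "0 < (1 - a)^2 + (1 - b)^2" using assms by (simp add: add_pos_nonneg)
  thus ?thesis using assms by (simp add: power2_eq_square algebra_simps)
qed

lemma barrlund_ball_2:
  fixes x y :: "'a::euclidean_space"
  assumes "norm x < 1"
  shows "barrlund (ball 0 1) 2 x y =
    norm (x - y) / sqrt (2 + (norm x)^2 + (norm y)^2 - 2 * norm (x + y))"
proof -
  define D where "D = (\<lambda>t. 2 + (norm x)^2 + (norm y)^2 - 2 * t)"
  define f where "f = (\<lambda>z::'a. norm (x - y) /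
      ((norm (x - z)) powr 2 + (norm (z - y)) powr 2) powr (1 / 2))"
  have f: "f z = norm (x - y) / sqrt (D (inner z (x + y)))" if "norm z = 1" for z
  proof -
    have "inner z z = 1" using that by (simp add: dot_square_norm)
    hence "(norm (x - z))^2 + (norm (z - y))^2 = D (inner z (x + y))"
      by (simp add: D_def power2_norm_eq_inner inner_diff_left inner_diff_right
          inner_add_right inner_commute algebra_simps)
    thus ?thesis by (simp add: f_def powr_half_sqrt add_nonneg_nonneg)
  qed
  \<comment> \<open>the supremum is attained at the unit vector in the direction of \<open>x + y\<close>\<close>
  obtain z0 :: 'a where z0: "norm z0 = 1" "inner z0 (x + y) = norm (x + y)"
  proof (cases "x + y = 0")
    case True
    with vector_choose_size[of 1] that show ?thesis by auto
  next
    case False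
    with that[of "sgn (x + y)"] show ?thesis
      by (simp add: sgn_div_norm norm_sgn dot_square_norm power2_eq_square)
  qed
  have "D (norm (x + y)) \<le> D (inner z (x + y))" if "norm z = 1" for z
    using norm_cauchy_schwarz[of z "x + y"] that by (simp add: D_def)
  moreover have "D (norm (x + y)) > 0"
    unfolding D_def using assms norm_triangle_ineq by (rule barrlund_denominator_pos)
  ultimately have "f z \<le> f z0" if "norm z = 1" for z
    using that z0 by (simp add: f frac_le)
  hence "Sup (f ` sphere 0 1) = f z0"
    by (intro cSup_eq_maximum) (use z0 in auto)
  moreover have "barrlund (ball 0 1) 2 x y = Sup (f ` sphere 0 1)"
    by (simp add: barrlund_def f_def)
  ultimately show ?thesis using z0 by (simp add: f D_def)
qed


definition barrlund_tanh_ratio_sq :: "real \<Rightarrow> real \<Rightarrow> real \<Rightarrow> real" where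
  "barrlund_tanh_ratio_sq a b s = ((1 + a^2) * (1 + b^2) - s^2) / (2 + a^2 + b^2 - 2 * s)"

lemma barrlund_ball_eq_sqrt_ratio_mult_tanh:
  fixes x y :: "'a::euclidean_space"
  assumes "norm x < 1" "norm y < 1"
  shows "barrlund (ball 0 1) 2 x y =
    sqrt (barrlund_tanh_ratio_sq (norm x) (norm y) (norm (x + y))) * tanh (rho_ball x y / 2)"
proof -
  define d where "d = norm (x - y)"
  define E where "E = d^2 + (1 - (norm x)^2) * (1 - (norm y)^2)"
  define D where "D = 2 + (norm x)^2 + (norm y)^2 - 2 * norm (x + y)"
  have "0 < (1 - (norm x)^2) * (1 - (norm y)^2)" using assms by (simp add: abs_square_less_1)
  hence E: "0 < E" by (simp add: E_def add_nonneg_pos)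
  \<comment> \<open>parallelogram law, which turns \<open>E\<close> into \<open>(1 + |x|\<^sup>2)(1 + |y|\<^sup>2) - |x + y|\<^sup>2\<close>\<close>
  have "d^2 = 2 * (norm x)^2 + 2 * (norm y)^2 - (norm (x + y))^2"
    by (simp add: d_def power2_norm_eq_inner inner_diff_left inner_diff_right
        inner_add_left inner_add_right inner_commute algebra_simps)
  hence "barrlund_tanh_ratio_sq (norm x) (norm y) (norm (x + y)) = E / D"
    by (simp add: barrlund_tanh_ratio_sq_def E_def D_def algebra_simps)
  moreover have "sqrt (E / D) * (d / sqrt E) = d / sqrt D"
    using E by (simp add: real_sqrt_divide)
  ultimately show ?thesis
    using assms by (simp add: barrlund_ball_2 tanh_half_rho_ball d_def E_def D_def)
qed

lemma barrlund_tanh_ratio_sq_lower: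
  fixes a b s :: real
  assumes "0 \<le> a" "a \<le> b" "b < 1" "0 \<le> s" "s \<le> a + b"
  shows "(1 + a^2) / 2 \<le> barrlund_tanh_ratio_sq a b s"
proof -
  \<comment> \<open>using \<open>s\<^sup>2 \<le> s (a + b)\<close>, the quantity to be shown nonnegative (concave in \<open>s\<close>) is bounded
     below by the affine \<open>f\<close>, which is nonnegative at both ends \<open>s = 0\<close> and \<open>s = a + b\<close>\<close>
  define f where "f t = (1 + a^2) * (b^2 - a^2) + 2 * t * (1 + a^2 - a - b)" for t
  have "2 * s^2 \<le> 2 * s * (a + b)" using assms by (simp add: power2_eq_square mult_left_mono)
  hence "f s \<le> 2 * ((1 + a^2) * (1 + b^2) - s^2) - (1 + a^2) * (2 + a^2 + b^2 - 2 * s)"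
    by (simp add: f_def algebra_simps)
  moreover have "0 \<le> f s"
  proof (cases "1 + a^2 - a - b \<ge> 0")
    case True
    have "0 \<le> (1 + a^2) * (b^2 - a^2)" using assms by (simp add: power_mono)
    thus ?thesis using True assms by (simp add: f_def)
  next
    case False
    have "f (a + b) = (a + b) * ((1 - a)^3 + (1 - b) * (1 - a^2))"
      by (simp add: f_def) algebra
    also have "\<dots> \<ge> 0" using assms by (simp add: abs_square_le_1)
    finally show ?thesis
      using False assms mult_right_mono_neg[of s "a + b" "2 * (1 + a^2 - a - b)"]
      by (simp add: f_def algebra_simps)
  qed
  ultimately show ?thesis
    using barrlund_denominator_pos[of a s b] assms
    by (simp add: barrlund_tanh_ratio_sq_def pos_le_divide_eq)
qed

lemma barrlund_tanh_ratio_sq_upper: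
  fixes a b s :: real
  assumes "0 \<le> a" "a \<le> b" "b < 1" "s \<le> a + b"
  shows "barrlund_tanh_ratio_sq a b s \<le> (1 + b)^2 / 2"
proof -
  \<comment> \<open>\<open>g\<close> is convex in \<open>t\<close> and decreasing up to \<open>(1 + b)\<^sup>2 / 2 \<ge> 2 b\<close>, so it is smallest at \<open>t = a + b\<close>\<close>
  define g where "g t = (1 + b)^2 * (2 + a^2 + b^2 - 2 * t) - 2 * ((1 + a^2) * (1 + b^2) - t^2)" for t
  have "g (a + b) = (b - a) * ((1 - a) * (1 - b) + (1 - b)^2 * (1 + 2 * b) + b * (3 - b) * (b - a))"
    by (simp add: g_def) algebra
  also have "\<dots> \<ge> 0" using assms by simp
  finally have "0 \<le> g (a + b)" .
  moreover have "g s = g (a + b) + (a + b - s) * (2 * (1 + b)^2 - 2 * (s + a + b))"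
    by (simp add: g_def) algebra
  moreover have "2 * (s + a + b) \<le> 2 * (1 + b)^2"
    using assms zero_le_power2[of "1 - b"] by (simp add: power2_eq_square algebra_simps)
  ultimately have "0 \<le> g s" using assms by simp
  thus ?thesis
    using barrlund_denominator_pos[of a s b] assms
    by (simp add: barrlund_tanh_ratio_sq_def g_def divide_le_eq)
qed

lemma barrlund_tanh_ratio_sq_equal:
  fixes r s :: real
  assumes "r < 1" "s \<le> 2 * r"
  shows "barrlund_tanh_ratio_sq r r s = (1 + r^2 + s) / 2"
proof -
  have "0 < 2 + r^2 + r^2 - 2 * s" using barrlund_denominator_pos[of r s r] assms by simp
  thus ?thesis unfolding barrlund_tanh_ratio_sq_def
    by (simp add: divide_eq_eq power2_eq_square algebra_simps)
qed


lemma barrlund_ball_tanh_bounds: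
  fixes x y :: "'a::euclidean_space"
  assumes "norm y < 1" "norm x \<le> norm y"
  shows "sqrt ((1 + (norm x)^2) / 2) * tanh (rho_ball x y / 2) \<le> barrlund (ball 0 1) 2 x y"
    and "barrlund (ball 0 1) 2 x y \<le> (1 + norm y) / sqrt 2 * tanh (rho_ball x y / 2)"
proof -
  have x: "norm x < 1" using assms by simp
  have s: "norm (x + y) \<le> norm x + norm y" by (rule norm_triangle_ineq)
  have th: "0 \<le> tanh (rho_ball x y / 2)" using x assms(1) by (rule tanh_half_rho_ball_nonneg)
  show "sqrt ((1 + (norm x)^2) / 2) * tanh (rho_ball x y / 2) \<le> barrlund (ball 0 1) 2 x y"
    using barrlund_tanh_ratio_sq_lower[OF _ assms(2,1) _ s] th
    by (simp add: barrlund_ball_eq_sqrt_ratio_mult_tanh x assms mult_right_mono)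
  have "sqrt (barrlund_tanh_ratio_sq (norm x) (norm y) (norm (x + y))) \<le> sqrt ((1 + norm y)^2 / 2)"
    using barrlund_tanh_ratio_sq_upper[OF _ assms(2,1) s] by simp
  also have "\<dots> = (1 + norm y) / sqrt 2" by (simp add: real_sqrt_divide)
  finally have "sqrt (barrlund_tanh_ratio_sq (norm x) (norm y) (norm (x + y))) * tanh (rho_ball x y / 2)
      \<le> (1 + norm y) / sqrt 2 * tanh (rho_ball x y / 2)"
    using th by (rule mult_right_mono)
  thus "barrlund (ball 0 1) 2 x y \<le> (1 + norm y) / sqrt 2 * tanh (rho_ball x y / 2)"
    by (simp add: barrlund_ball_eq_sqrt_ratio_mult_tanh x assms)
qed

lemma barrlund_ball_tanh_bounds_annulus:
  fixes x y :: "'a::euclidean_space"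
  assumes "0 \<le> rl" "rl \<le> norm x" "norm x \<le> norm y" "norm y \<le> ru" "ru < 1"
  shows "sqrt ((1 + rl^2) / 2) * tanh (rho_ball x y / 2) \<le> barrlund (ball 0 1) 2 x y"
    and "barrlund (ball 0 1) 2 x y \<le> (1 + ru) / sqrt 2 * tanh (rho_ball x y / 2)"
proof -
  have y: "norm y < 1" and x: "norm x < 1" using assms by auto
  have th: "0 \<le> tanh (rho_ball x y / 2)" using x y by (rule tanh_half_rho_ball_nonneg)
  have "sqrt ((1 + rl^2) / 2) \<le> sqrt ((1 + (norm x)^2) / 2)" using assms by (simp add: power_mono)
  hence "sqrt ((1 + rl^2) / 2) * tanh (rho_ball x y / 2)
      \<le> sqrt ((1 + (norm x)^2) / 2) * tanh (rho_ball x y / 2)" using th by (rule mult_right_mono)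
  also have "\<dots> \<le> barrlund (ball 0 1) 2 x y" using y assms(3) by (rule barrlund_ball_tanh_bounds)
  finally show "sqrt ((1 + rl^2) / 2) * tanh (rho_ball x y / 2) \<le> barrlund (ball 0 1) 2 x y" .
  have "barrlund (ball 0 1) 2 x y \<le> (1 + norm y) / sqrt 2 * tanh (rho_ball x y / 2)"
    using y assms(3) by (rule barrlund_ball_tanh_bounds)
  also have "\<dots> \<le> (1 + ru) / sqrt 2 * tanh (rho_ball x y / 2)"
    using assms th by (intro mult_right_mono divide_right_mono) auto
  finally show "barrlund (ball 0 1) 2 x y \<le> (1 + ru) / sqrt 2 * tanh (rho_ball x y / 2)" .
qed

lemma barrlund_ball_equal_norms:
  fixes x y :: "'a::euclidean_space"
  assumes "norm x = r" "norm y = r" "r < 1"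
  shows "barrlund (ball 0 1) 2 x y = sqrt ((1 + r^2 + norm (x + y)) / 2) * tanh (rho_ball x y / 2)"
proof -
  have "norm (x + y) \<le> 2 * r" using norm_triangle_ineq[of x y] assms by simp
  thus ?thesis
    using assms by (simp add: barrlund_ball_eq_sqrt_ratio_mult_tanh barrlund_tanh_ratio_sq_equal)
qed

lemma equal_norm_pair_with_sum_norm:
  assumes "2 \<le> DIM('a)" "0 \<le> s" "s < 2 * r"
  obtains x y :: "'a::euclidean_space" where "norm x = r" "norm y = r" "norm (x + y) = s" "x \<noteq> y"
proof -
  obtain e :: 'a where e: "norm e = 1" using vector_choose_size[of 1] by auto
  obtain f :: 'a where "f \<noteq> 0" "orthogonal e f" using orthogonal_to_vector_exists[OF assms(1)] .
  then obtain u :: 'a where u: "norm u = 1" "orthogonal e u"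
    by (metis norm_sgn orthogonal_clauses(2) sgn_div_norm)
  define q where "q = sqrt (r^2 - s^2 / 4)"
  have "s^2 < (2 * r)^2" using assms by (intro power_strict_mono) auto
  hence q: "0 < q" "q^2 = r^2 - s^2 / 4" by (simp_all add: q_def power_mult_distrib)
  have norm_comb: "norm (p *\<^sub>R e + t *\<^sub>R u) = sqrt (p^2 + t^2)" for p t
  proof (rule real_sqrt_unique[symmetric])
    show "(norm (p *\<^sub>R e + t *\<^sub>R u))^2 = p^2 + t^2"
      using norm_add_Pythagorean[of "p *\<^sub>R e" "t *\<^sub>R u"] u e
      by (simp add: orthogonal_clauses power_mult_distrib)
  qed simp
  have r: "0 < r" using assms by simp
  define x where "x = (s / 2) *\<^sub>R e + (- q) *\<^sub>R u"
  define y where "y = (s / 2) *\<^sub>R e + q *\<^sub>R u"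
  have "norm x = sqrt ((s / 2)^2 + (- q)^2)" "norm y = sqrt ((s / 2)^2 + q^2)"
    unfolding x_def y_def by (rule norm_comb)+
  moreover have "(s / 2)^2 + q^2 = r^2" using q by (simp add: power_divide)
  ultimately have "norm x = r" "norm y = r" using r by simp_all
  moreover have "x + y = (s / 2 + s / 2) *\<^sub>R e + (- q + q) *\<^sub>R u"
    "x - y = (s / 2 - s / 2) *\<^sub>R e + (- q - q) *\<^sub>R u"
    unfolding x_def y_def scaleR_add_left scaleR_diff_left by (simp_all add: algebra_simps)
  hence "norm (x + y) = s" "0 < norm (x - y)"
    using assms q(1) by (simp_all only: norm_comb) simp_all
  ultimately show ?thesis using that by force
qed

lemma barrlund_ball_lower_constant_sharp:
  fixes rl ru c :: real
  assumes "2 \<le> DIM('a)" "0 \<le> rl" "rl \<le> ru" "ru < 1" "0 < ru"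
    and "sqrt ((1 + rl^2) / 2) < c"
  obtains x y :: "'a::euclidean_space"
  where "rl \<le> norm x" "norm x = norm y" "norm y \<le> ru"
    "barrlund (ball 0 1) 2 x y < c * tanh (rho_ball x y / 2)"
proof -
  have "0 \<le> sqrt ((1 + rl^2) / 2)" by simp
  hence c: "0 < c" using assms(6) by linarith
  have "(sqrt ((1 + rl^2) / 2))^2 < c^2"
    using assms(6) by (intro power_strict_mono) auto
  hence gap: "0 < 2 * c^2 - 1 - rl^2" by simp
  define \<delta> where "\<delta> = min 1 ((2 * c^2 - 1 - rl^2) / 4)"
  define t where "t = min ru (rl + \<delta>)"
  have \<delta>: "0 < \<delta>" "\<delta> \<le> 1" "4 * \<delta> \<le> 2 * c^2 - 1 - rl^2" using gap by (auto simp: \<delta>_def min_def)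
  have t: "rl \<le> t" "t \<le> ru" "0 < t" using assms \<delta> by (auto simp: t_def)
  have "t^2 \<le> (rl + \<delta>)^2" using t by (intro power_mono) (auto simp: t_def)
  also have "\<dots> \<le> rl^2 + 3 * \<delta>"
  proof -
    have "\<delta> * \<delta> \<le> \<delta>" "rl * \<delta> \<le> \<delta>"
      using assms \<delta> by (simp_all add: mult_left_le_one_le)
    thus ?thesis by (simp add: power2_eq_square algebra_simps)
  qed
  finally have "(1 + t^2) / 2 < c^2" using \<delta> by simp
  hence lt: "sqrt ((1 + t^2) / 2) < c" using c by (simp add: real_less_lsqrt)
  obtain x y :: 'a where xy: "norm x = t" "norm y = t" "norm (x + y) = 0" "x \<noteq> y"
    using equal_norm_pair_with_sum_norm[OF assms(1), of 0 t] t by auto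
  have "0 < tanh (rho_ball x y / 2)" using xy t assms by (intro tanh_half_rho_ball_pos) auto
  hence "barrlund (ball 0 1) 2 x y < c * tanh (rho_ball x y / 2)"
    using xy t assms lt by (simp add: barrlund_ball_equal_norms)
  thus ?thesis using xy t by (intro that[of x y]) simp_all
qed

lemma barrlund_ball_upper_constant_sharp:
  fixes r C :: real
  assumes "2 \<le> DIM('a)" "0 < r" "r < 1" "C < (1 + r) / sqrt 2"
  obtains x y :: "'a::euclidean_space"
  where "norm x = r" "norm y = r" "C * tanh (rho_ball x y / 2) < barrlund (ball 0 1) 2 x y"
proof -
  obtain s where s: "0 \<le> s" "s < 2 * r" "C < sqrt ((1 + r^2 + s) / 2)"
  proof (cases "C \<le> 0")
    case True
    have "0 < sqrt ((1 + r^2 + 0) / 2)" by (simp add: add_pos_nonneg)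
    hence "C < sqrt ((1 + r^2 + 0) / 2)" using True by linarith
    thus ?thesis using that[of 0] assms by simp
  next
    case False
    have "C * sqrt 2 < 1 + r" using assms by (simp add: less_divide_eq)
    hence "(C * sqrt 2)^2 < (1 + r)^2" using False by (intro power_strict_mono) auto
    hence \<sigma>: "2 * C^2 - 1 - r^2 < 2 * r" by (simp add: power_mult_distrib power2_eq_square algebra_simps)
    define s where "s = max 0 ((2 * C^2 - 1 - r^2 + 2 * r) / 2)"
    have "C^2 < (1 + r^2 + s) / 2" using \<sigma> by (auto simp: s_def max_def field_simps)
    hence "C < sqrt ((1 + r^2 + s) / 2)" by (rule real_less_rsqrt)
    moreover have "0 \<le> s" "s < 2 * r" using \<sigma> assms by (auto simp: s_def)
    ultimately show ?thesis using that by blast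
  qed
  obtain x y :: 'a where xy: "norm x = r" "norm y = r" "norm (x + y) = s" "x \<noteq> y"
    using equal_norm_pair_with_sum_norm[OF assms(1) s(1,2)] .
  have "0 < tanh (rho_ball x y / 2)" using xy assms by (intro tanh_half_rho_ball_pos) auto
  hence "C * tanh (rho_ball x y / 2) < barrlund (ball 0 1) 2 x y"
    using xy assms s by (simp add: barrlund_ball_equal_norms)
  thus ?thesis using that xy by simp
qed

theorem theorem3p5:
  fixes rl ru :: real
  assumes dim: "DIM('a::euclidean_space) \<ge> 2"
    and r: "0 \<le> rl" "rl \<le> ru" "ru < 1"
  shows "(\<forall>x y :: 'a. x \<in> ball 0 1 \<and> y \<in> ball 0 1 \<and> rl \<le> norm x \<and> norm x \<le> norm y \<and> norm y \<le> ru \<longrightarrow>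
            sqrt ((1 + rl^2) / 2) * tanh (rho_ball x y / 2) \<le> barrlund (ball 0 1) 2 x y \<and>
            barrlund (ball 0 1) 2 x y \<le> (1 + ru) / sqrt 2 * tanh (rho_ball x y / 2))
       \<and> (0 < ru \<longrightarrow>
          (\<forall>c > sqrt ((1 + rl^2) / 2). \<exists>x y :: 'a. x \<in> ball 0 1 \<and> y \<in> ball 0 1 \<and>
              rl \<le> norm x \<and> norm x \<le> norm y \<and> norm y \<le> ru \<and>
              barrlund (ball 0 1) 2 x y < c * tanh (rho_ball x y / 2)) \<and>
          (\<forall>C < (1 + ru) / sqrt 2. \<exists>x y :: 'a. x \<in> ball 0 1 \<and> y \<in> ball 0 1 \<and>
              rl \<le> norm x \<and> norm x \<le> norm y \<and> norm y \<le> ru \<and>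
              C * tanh (rho_ball x y / 2) < barrlund (ball 0 1) 2 x y))"
proof (intro conjI allI impI)
  fix x y :: 'a
  assume "x \<in> ball 0 1 \<and> y \<in> ball 0 1 \<and> rl \<le> norm x \<and> norm x \<le> norm y \<and> norm y \<le> ru"
  thus "sqrt ((1 + rl^2) / 2) * tanh (rho_ball x y / 2) \<le> barrlund (ball 0 1) 2 x y"
    "barrlund (ball 0 1) 2 x y \<le> (1 + ru) / sqrt 2 * tanh (rho_ball x y / 2)"
    using r barrlund_ball_tanh_bounds_annulus[of rl x y ru] by auto
next
  fix c assume "0 < ru" "sqrt ((1 + rl^2) / 2) < c"
  then obtain x y :: 'a where "rl \<le> norm x" "norm x = norm y" "norm y \<le> ru"
    "barrlund (ball 0 1) 2 x y < c * tanh (rho_ball x y / 2)"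
    using barrlund_ball_lower_constant_sharp[OF dim r] by blast
  thus "\<exists>x y :: 'a. x \<in> ball 0 1 \<and> y \<in> ball 0 1 \<and>
      rl \<le> norm x \<and> norm x \<le> norm y \<and> norm y \<le> ru \<and>
      barrlund (ball 0 1) 2 x y < c * tanh (rho_ball x y / 2)"
    using r by (intro exI[of _ x] exI[of _ y]) auto
next
  fix C assume "0 < ru" "C < (1 + ru) / sqrt 2"
  then obtain x y :: 'a where "norm x = ru" "norm y = ru"
    "C * tanh (rho_ball x y / 2) < barrlund (ball 0 1) 2 x y"
    using barrlund_ball_upper_constant_sharp[OF dim _ r(3)] by blast
  thus "\<exists>x y :: 'a. x \<in> ball 0 1 \<and> y \<in> ball 0 1 \<and>
      rl \<le> norm x \<and> norm x \<le> norm y \<and> norm y \<le> ru \<and>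
      C * tanh (rho_ball x y / 2) < barrlund (ball 0 1) 2 x y"
    using r by (intro exI[of _ x] exI[of _ y]) auto
qed

end
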